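(* Let $\alpha\in(0,\infty)$. Let $\psi_1,\psi_2$ be Laplace exponents of (unkilled) spectrally positive Lévy processes with $\psi_1'(0+)\ge0$ and $\psi_2'(0+)\ge0$. If $\psi_1(\alpha n)=\psi_2(\alpha n)$ for all $n\in\mathbb{N}$, then $\psi_1=\psi_2$ on $[0,\infty)$.
   Context: A spectrally positive Lévy process is a Lévy process with no negative jumps that is not a subordinator. Its Laplace exponent is $\psi(z)=\log\mathbb{E}_0[e^{-z\xi_1}]=-\gamma z+\frac{\sigma^2}{2}z^2+\int_{(0,\infty)}(e^{-zh}+zh\mathbf{1}_{(0,1]}(h)-1)\,\mathsf{m}(dh)$, $z\in[0,\infty)$, for unique $\gamma\in\mathbb{R}$, $\sigma\ge0$ and a measure $\mathsf{m}$ on $(0,\infty)$ with $\int(h^2\wedge1)\mathsf{m}(dh)<\infty$; in particular $\psi(0)=0$. $\psi'(0+)$ denotes the right derivative at $0$. *)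

theory Defs
  imports "HOL-Analysis.Analysis"
begin

definition levy_measure_pos :: "real measure \<Rightarrow> bool" where
  "levy_measure_pos m \<longleftrightarrow> sets m = sets borel \<and> emeasure m {..0} = 0
      \<and> integrable m (\<lambda>h. min (h\<^sup>2) 1)"

definition lk_exponent :: "real \<Rightarrow> real \<Rightarrow> real measure \<Rightarrow> real \<Rightarrow> real" where
  "lk_exponent \<gamma> \<sigma> m z =
     - \<gamma> * z + \<sigma>\<^sup>2 / 2 * z\<^sup>2
     + (\<integral>h. (exp (- z * h) + z * h * indicator {0<..1} h - 1) \<partial>m)"

text \<open>The triplet belongs to a subordinator iff there is no Gaussian part, the jumps
  have finite variation, and the resulting drift gamma - int_(0,1] h m(dh) is nonnegative.\<close>
definition subordinator_triplet :: "real \<Rightarrow> real \<Rightarrow> real measure \<Rightarrow> bool" where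
  "subordinator_triplet \<gamma> \<sigma> m \<longleftrightarrow>
     \<sigma> = 0 \<and> integrable m (\<lambda>h. h * indicator {0<..1} h)
     \<and> \<gamma> - (\<integral>h. h * indicator {0<..1} h \<partial>m) \<ge> 0"

text \<open>psi is (on [0,infinity)) the Laplace exponent of an (unkilled) spectrally positive
  Levy process, i.e. of a Levy process without negative jumps that is not a subordinator.\<close>
definition sp_laplace_exponent :: "(real \<Rightarrow> real) \<Rightarrow> bool" where
  "sp_laplace_exponent \<psi> \<longleftrightarrow>
     (\<exists>\<gamma> \<sigma> m. \<sigma> \<ge> 0 \<and> levy_measure_pos m \<and> \<not> subordinator_triplet \<gamma> \<sigma> m
        \<and> (\<forall>z\<ge>0. \<psi> z = lk_exponent \<gamma> \<sigma> m z))"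

end

theory Submission
  imports Defs "HOL-Real_Asymp.Real_Asymp"
begin

text \<open>The second differences of \<open>\<psi>\<close> along the lattice \<open>a\<nat>\<close> are the
  moments \<open>\<integral> t\<^sup>n d\<mu>\<close> of the finite measure \<open>\<mu> = \<sigma>\<^sup>2 a\<^sup>2 \<delta>\<^sub>1 + \<Phi>\<^sub>* ((1 - exp (-a h))\<^sup>2 m(dh))\<close>
  on \<open>[0,1]\<close>, where \<open>\<Phi> h = exp (-a h)\<close>. By the Weierstrass approximation theorem these
  moments determine \<open>\<integral> f d\<mu>\<close> for every continuous \<open>f\<close> on \<open>[0,1]\<close>. For \<open>z > 0\<close> there is such
  an \<open>f = f\<^sub>z\<close> with \<open>\<psi> z = \<integral> f\<^sub>z d\<mu> + c z\<close>, where the constant \<open>c\<close> depends on the triplet only;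
  comparing at \<open>z = a\<close> identifies \<open>c\<close>, and hence \<open>\<psi>\<close> is determined by its values on \<open>a\<nat>\<close>.\<close>

lemma levy_measure_pos_measurable:
  assumes "levy_measure_pos m" "f \<in> borel_measurable borel"
  shows "f \<in> borel_measurable m"
proof -
  have same: "borel_measurable m = borel_measurable (borel :: real measure)"
    using assms(1) unfolding levy_measure_pos_def by (intro measurable_cong_sets) auto
  from assms(2) show ?thesis unfolding same .
qed

lemma levy_measure_pos_AE_pos:
  assumes "levy_measure_pos m"
  shows "AE h in m. 0 < h"
proof -
  have "{..0::real} \<in> null_sets m"
    using assms unfolding levy_measure_pos_def by (intro null_setsI) auto
  then show ?thesis by (rule AE_I') auto
qed

lemma levy_measure_pos_integrable:
  assumes "levy_measure_pos m" "f \<in> borel_measurable borel"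
    and "\<And>h. 0 < h \<Longrightarrow> \<bar>f h\<bar> \<le> C * min (h\<^sup>2) 1"
  shows "integrable m f"
proof (rule Bochner_Integration.integrable_bound)
  show "integrable m (\<lambda>h. C * min (h\<^sup>2) 1)"
    using assms(1) unfolding levy_measure_pos_def by auto
  show "f \<in> borel_measurable m" using assms(1,2) by (rule levy_measure_pos_measurable)
  show "AE h in m. norm (f h) \<le> norm (C * min (h\<^sup>2) 1)"
    using levy_measure_pos_AE_pos[OF assms(1)] by eventually_elim (use assms(3) in force)
qed

lemma exp_neg_le_quadratic:
  fixes x :: real
  assumes "0 \<le> x"
  shows "exp (- x) \<le> 1 - x + x\<^sup>2 / 2"
proof -
  define q where "q = 1 - x + x\<^sup>2 / 2"
  have q_nonneg: "0 \<le> q"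
    using zero_le_power2[of "x - 1"] unfolding q_def by (simp add: power2_eq_square algebra_simps)
  have "q * (1 + x + x\<^sup>2 / 2) = 1 + x ^ 4 / 4"
    unfolding q_def by (simp add: algebra_simps power2_eq_square power4_eq_xxxx)
  then have "1 \<le> q * (1 + x + x\<^sup>2 / 2)" by simp
  also have "\<dots> \<le> q * exp x"
    using exp_lower_Taylor_quadratic[OF assms] q_nonneg by (rule mult_left_mono)
  finally show ?thesis by (simp add: q_def exp_minus field_simps)
qed

lemma min_square_one_eq_square: "0 \<le> h \<Longrightarrow> h \<le> 1 \<Longrightarrow> min (h\<^sup>2) 1 = (h::real)\<^sup>2"
  by (simp add: power_le_one)

lemma min_square_one_eq_one: "1 < h \<Longrightarrow> min (h\<^sup>2) 1 = (1::real)"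
  using one_le_power[of h 2] by simp

definition lk_integrand :: "real \<Rightarrow> real \<Rightarrow> real" where
  "lk_integrand z h = exp (- z * h) + z * h * indicator {0<..1} h - 1"

definition truncation_defect :: "real \<Rightarrow> real" where
  "truncation_defect h = h * indicator {0<..1} h - (1 - exp (- h))"

lemma lk_exponent_altdef:
  "lk_exponent \<gamma> \<sigma> m z = - \<gamma> * z + \<sigma>\<^sup>2 / 2 * z\<^sup>2 + (\<integral>h. lk_integrand z h \<partial>m)"
  unfolding lk_exponent_def lk_integrand_def by simp

lemma lk_exponent_at_zero: "lk_exponent \<gamma> \<sigma> m 0 = 0"
  unfolding lk_exponent_altdef lk_integrand_def by simp

lemma lk_integrand_bound:
  assumes "0 \<le> z" "0 < h"
  shows "\<bar>lk_integrand z h\<bar> \<le> max (z\<^sup>2 / 2) 1 * min (h\<^sup>2) 1"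
proof (cases "h \<le> 1")
  case True
  have "\<bar>lk_integrand z h\<bar> = exp (- z * h) - 1 + z * h"
    using True assms exp_ge_add_one_self[of "- z * h"] by (simp add: lk_integrand_def)
  also have "\<dots> \<le> z\<^sup>2 / 2 * h\<^sup>2"
    using exp_neg_le_quadratic[of "z * h"] assms by (simp add: power_mult_distrib)
  also have "\<dots> \<le> max (z\<^sup>2 / 2) 1 * min (h\<^sup>2) 1"
    using True assms by (simp add: min_square_one_eq_square mult_right_mono)
  finally show ?thesis .
next
  case False
  have "exp (- z * h) \<le> 1" using assms by simp
  then have "\<bar>lk_integrand z h\<bar> \<le> 1"
    using False by (simp add: lk_integrand_def)
  also have "\<dots> \<le> max (z\<^sup>2 / 2) 1 * min (h\<^sup>2) 1"
    using False by (simp add: min_square_one_eq_one)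
  finally show ?thesis .
qed

lemma truncation_defect_bound:
  assumes "0 < h"
  shows "\<bar>truncation_defect h\<bar> \<le> min (h\<^sup>2) 1"
proof (cases "h \<le> 1")
  case True
  have "\<bar>truncation_defect h\<bar> = exp (- h) - 1 + h"
    using True assms exp_ge_add_one_self[of "- h"] by (simp add: truncation_defect_def)
  also have "\<dots> \<le> h\<^sup>2"
    using exp_neg_le_quadratic[of h] assms zero_le_power2[of h] by linarith
  finally show ?thesis using True assms by (simp add: min_square_one_eq_square)
next
  case False
  have "exp (- h) \<le> 1" using assms by simp
  then show ?thesis using False by (simp add: truncation_defect_def min_square_one_eq_one)
qed

lemma integrable_lk_integrand:
  assumes "levy_measure_pos m" "0 \<le> z"
  shows "integrable m (lk_integrand z)"
  by (rule levy_measure_pos_integrable[OF assms(1) _ lk_integrand_bound[OF assms(2)]])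
    (simp add: lk_integrand_def)

lemma integrable_truncation_defect:
  assumes "levy_measure_pos m"
  shows "integrable m truncation_defect"
proof (rule levy_measure_pos_integrable[OF assms, of _ 1])
  show "truncation_defect \<in> borel_measurable borel" unfolding truncation_defect_def by simp
qed (use truncation_defect_bound in simp)

text \<open>\<open>levy_functional a \<sigma> m f\<close> is \<open>\<integral> f d\<mu>\<close> for the measure \<open>\<mu>\<close> of the header; \<open>levy_point\<close>
  is \<open>\<Phi>\<close>, clamped so that it maps all of \<open>\<real>\<close> into \<open>[0,1]\<close>.\<close>

definition levy_point :: "real \<Rightarrow> real \<Rightarrow> real" where
  "levy_point a h = exp (- a * max h 0)"

definition levy_weight :: "real \<Rightarrow> real \<Rightarrow> real" where
  "levy_weight a h = (1 - exp (- a * h))\<^sup>2"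

definition levy_functional :: "real \<Rightarrow> real \<Rightarrow> real measure \<Rightarrow> (real \<Rightarrow> real) \<Rightarrow> real" where
  "levy_functional a \<sigma> m f = \<sigma>\<^sup>2 * a\<^sup>2 * f 1 + (\<integral>h. f (levy_point a h) * levy_weight a h \<partial>m)"

lemma levy_point_in_unit_interval: "0 \<le> a \<Longrightarrow> levy_point a h \<in> {0..1}"
  unfolding levy_point_def by auto

lemma levy_weight_nonneg: "0 \<le> levy_weight a h"
  unfolding levy_weight_def by simp

lemma levy_weight_bound:
  assumes "0 < a" "0 < h"
  shows "levy_weight a h \<le> max (a\<^sup>2) 1 * min (h\<^sup>2) 1"
proof -
  have base: "0 \<le> 1 - exp (- (a * h))" "1 - exp (- (a * h)) \<le> a * h" "1 - exp (- (a * h)) \<le> 1"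
    using assms exp_ge_add_one_self[of "- (a * h)"] by auto
  show ?thesis
  proof (cases "h \<le> 1")
    case True
    have "levy_weight a h \<le> (a * h)\<^sup>2" unfolding levy_weight_def using base by (simp add: power_mono)
    also have "\<dots> \<le> max (a\<^sup>2) 1 * min (h\<^sup>2) 1"
      using True assms by (simp add: min_square_one_eq_square power_mult_distrib mult_right_mono)
    finally show ?thesis .
  next
    case False
    have "levy_weight a h \<le> 1\<^sup>2" unfolding levy_weight_def using base by (intro power_mono) auto
    also have "\<dots> \<le> max (a\<^sup>2) 1 * min (h\<^sup>2) 1" using False by (simp add: min_square_one_eq_one)
    finally show ?thesis .
  qed
qed

lemma integrable_levy_functional:
  assumes "levy_measure_pos m" "0 < a" "continuous_on {0..1} f"
  shows "integrable m (\<lambda>h. f (levy_point a h) * levy_weight a h)"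
proof -
  obtain B where B: "\<forall>t\<in>{0..1}. \<bar>f t\<bar> \<le> B"
    using compact_imp_bounded[OF compact_continuous_image[OF assms(3) compact_Icc]]
    unfolding bounded_iff by auto
  have "continuous_on UNIV (\<lambda>h. f (levy_point a h))"
    unfolding levy_point_def
    by (rule continuous_on_compose2[OF assms(3)], intro continuous_intros)
      (use levy_point_in_unit_interval[of a] assms(2) in \<open>auto simp: levy_point_def\<close>)
  then have "continuous_on UNIV (\<lambda>h. f (levy_point a h) * levy_weight a h)"
    unfolding levy_weight_def by (intro continuous_intros)
  then show ?thesis
  proof (rule levy_measure_pos_integrable[OF assms(1) borel_measurable_continuous_onI])
    fix h :: real assume "0 < h"
    have "\<bar>f (levy_point a h) * levy_weight a h\<bar> \<le> B * (max (a\<^sup>2) 1 * min (h\<^sup>2) 1)"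
      using B levy_point_in_unit_interval[of a h] assms(2) levy_weight_bound[OF assms(2) \<open>0 < h\<close>]
        levy_weight_nonneg[of a h]
      by (simp add: abs_mult mult_mono')
    then show "\<bar>f (levy_point a h) * levy_weight a h\<bar> \<le> B * max (a\<^sup>2) 1 * min (h\<^sup>2) 1"
      by (simp add: mult.assoc)
  qed
qed

lemma levy_functional_linear:
  assumes "levy_measure_pos m" "0 < a" "continuous_on {0..1} f" "continuous_on {0..1} g"
  shows "levy_functional a \<sigma> m (\<lambda>t. c * f t + d * g t)
    = c * levy_functional a \<sigma> m f + d * levy_functional a \<sigma> m g"
  using integrable_levy_functional[OF assms(1,2,3)] integrable_levy_functional[OF assms(1,2,4)]
  by (simp add: levy_functional_def algebra_simps)

lemma levy_functional_bound:
  assumes "levy_measure_pos m" "0 < a" "continuous_on {0..1} g"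
    and "\<And>t. t \<in> {0..1} \<Longrightarrow> \<bar>g t\<bar> \<le> e"
  shows "\<bar>levy_functional a \<sigma> m g\<bar> \<le> e * levy_functional a \<sigma> m (\<lambda>_. 1)"
proof -
  have "\<bar>\<integral>h. g (levy_point a h) * levy_weight a h \<partial>m\<bar>
      \<le> (\<integral>h. \<bar>g (levy_point a h) * levy_weight a h\<bar> \<partial>m)"
    by (rule integral_abs_bound)
  also have "\<dots> \<le> (\<integral>h. e * levy_weight a h \<partial>m)"
    using integrable_levy_functional[OF assms(1-3)] integrable_levy_functional[OF assms(1,2), of "\<lambda>_. e"]
      assms(4)[OF levy_point_in_unit_interval] assms(2) levy_weight_nonneg[of a]
    by (intro integral_mono integrable_abs) (auto simp: abs_mult mult_right_mono)
  finally have "\<bar>\<integral>h. g (levy_point a h) * levy_weight a h \<partial>m\<bar> \<le> e * (\<integral>h. levy_weight a h \<partial>m)"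
    by simp
  moreover have "\<bar>\<sigma>\<^sup>2 * a\<^sup>2 * g 1\<bar> \<le> \<sigma>\<^sup>2 * a\<^sup>2 * e"
    using assms(4)[of 1] by (simp add: abs_mult mult_left_mono)
  ultimately show ?thesis
    unfolding levy_functional_def by (simp add: algebra_simps)
qed

lemma functional_zero_on_Bernstein_sums:
  fixes L :: "(real \<Rightarrow> real) \<Rightarrow> real"
  assumes linear: "\<And>f g c d. continuous_on {0..1} f \<Longrightarrow> continuous_on {0..1} g
      \<Longrightarrow> L (\<lambda>t. c * f t + d * g t) = c * L f + d * L g"
    and monomials: "\<And>j. L (\<lambda>t. t ^ j) = 0"
  shows "L (\<lambda>t. \<Sum>k\<le>n. c k * Bernstein N k t) = 0"
proof -
  have scale: "L (\<lambda>t. c * g t) = c * L g" if "continuous_on {0..1} g" for c g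
    using linear[OF that that, of c 0] by simp
  have cont_monomial: "continuous_on {0..1} (\<lambda>t::real. t ^ j * (1 - t) ^ r)" for j r
    by (intro continuous_intros)
  have "L (\<lambda>t. t ^ j * (1 - t) ^ r) = 0" for r j
  proof (induction r arbitrary: j)
    case (Suc r)
    have split: "(\<lambda>t. t ^ j * (1 - t) ^ Suc r)
        = (\<lambda>t::real. 1 * (t ^ j * (1 - t) ^ r) + (- 1) * (t ^ Suc j * (1 - t) ^ r))"
      by (rule ext) (simp add: algebra_simps)
    show ?case
      unfolding split linear[OF cont_monomial cont_monomial] Suc.IH by simp
  qed (simp add: monomials)
  then have bernstein: "L (Bernstein n k) = 0" for n k
    using scale[OF cont_monomial, of "real (n choose k)" k "n - k"]
    by (simp add: Bernstein_def[abs_def] mult.assoc)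
  have cont_bernstein: "continuous_on {0..1} (Bernstein n k)" for n k
    unfolding Bernstein_def by (intro continuous_intros)
  show ?thesis
  proof (induction n)
    case (Suc n)
    have cont_sum: "continuous_on {0..1} (\<lambda>t. \<Sum>k\<le>n. c k * Bernstein N k t)"
      using cont_bernstein by (intro continuous_intros)
    show ?case
      using linear[OF cont_sum cont_bernstein, of 1 "c (Suc n)"] Suc.IH bernstein by simp
  qed (simp add: scale[OF cont_bernstein] bernstein)
qed

lemma functional_zero_if_zero_on_monomials:
  fixes L :: "(real \<Rightarrow> real) \<Rightarrow> real"
  assumes linear: "\<And>f g c d. continuous_on {0..1} f \<Longrightarrow> continuous_on {0..1} g
      \<Longrightarrow> L (\<lambda>t. c * f t + d * g t) = c * L f + d * L g"
    and bounded: "\<And>g e. continuous_on {0..1} g \<Longrightarrow> (\<And>t. t \<in> {0..1} \<Longrightarrow> \<bar>g t\<bar> \<le> e)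
      \<Longrightarrow> \<bar>L g\<bar> \<le> e * C"
    and monomials: "\<And>j. L (\<lambda>t. t ^ j) = 0"
    and f: "continuous_on {0..1} f"
  shows "L f = 0"
proof -
  have small: "\<bar>L f\<bar> \<le> e * C" if e: "0 < e" for e
  proof -
    obtain N where N: "\<And>x. x \<in> {0..1} \<Longrightarrow> \<bar>f x - (\<Sum>k\<le>N. f (real k / real N) * Bernstein N k x)\<bar> < e"
      using Bernstein_Weierstrass[OF f e] by blast
    define p where "p x = (\<Sum>k\<le>N. f (real k / real N) * Bernstein N k x)" for x
    have p_cont: "continuous_on {0..1} p" unfolding p_def Bernstein_def by (intro continuous_intros)
    have "L p = 0"
      unfolding p_def by (rule functional_zero_on_Bernstein_sums[OF linear monomials])
    then have "L (\<lambda>t. 1 * f t + (- 1) * p t) = L f"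
      using linear[OF f p_cont, of 1 "- 1"] by simp
    moreover have "\<bar>L (\<lambda>t. 1 * f t + (- 1) * p t)\<bar> \<le> e * C"
    proof (rule bounded)
      show "continuous_on {0..1} (\<lambda>t. 1 * f t + (- 1) * p t)"
        using f p_cont by (intro continuous_intros)
      show "\<bar>1 * f t + (- 1) * p t\<bar> \<le> e" if "t \<in> {0..1}" for t
        using N[OF that] unfolding p_def by simp
    qed
    ultimately show ?thesis by simp
  qed
  show ?thesis
  proof (rule ccontr)
    assume "L f \<noteq> 0"
    define e where "e = \<bar>L f\<bar> / (2 * (\<bar>C\<bar> + 1))"
    have "0 < e" using \<open>L f \<noteq> 0\<close> unfolding e_def by (simp add: add_pos_nonneg)
    have "e * C \<le> e * \<bar>C\<bar>" using \<open>0 < e\<close> by (simp add: mult_left_mono)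
    also have "\<dots> < \<bar>L f\<bar>"
      using \<open>L f \<noteq> 0\<close> unfolding e_def by (simp add: field_simps add_nonneg_pos)
    finally show False using small[OF \<open>0 < e\<close>] by simp
  qed
qed

lemma levy_functional_eq_if_moments_eq:
  assumes "levy_measure_pos m1" "levy_measure_pos m2" "0 < a"
    and "\<And>j. levy_functional a \<sigma>1 m1 (\<lambda>t. t ^ j) = levy_functional a \<sigma>2 m2 (\<lambda>t. t ^ j)"
    and "continuous_on {0..1} f"
  shows "levy_functional a \<sigma>1 m1 f = levy_functional a \<sigma>2 m2 f"
proof -
  define D where "D g = levy_functional a \<sigma>1 m1 g - levy_functional a \<sigma>2 m2 g" for g :: "real \<Rightarrow> real"
  define C where "C = levy_functional a \<sigma>1 m1 (\<lambda>_. 1) + levy_functional a \<sigma>2 m2 (\<lambda>_. 1)"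
  have "D f = 0"
  proof (rule functional_zero_if_zero_on_monomials[of D C])
    fix g h :: "real \<Rightarrow> real" and c d :: real
    assume "continuous_on {0..1} g" "continuous_on {0..1} h"
    then show "D (\<lambda>t. c * g t + d * h t) = c * D g + d * D h"
      using levy_functional_linear[OF assms(1,3)] levy_functional_linear[OF assms(2,3)]
      unfolding D_def by (simp add: algebra_simps)
  next
    fix g :: "real \<Rightarrow> real" and e :: real
    assume "continuous_on {0..1} g" "\<And>t. t \<in> {0..1} \<Longrightarrow> \<bar>g t\<bar> \<le> e"
    then have "\<bar>levy_functional a \<sigma>1 m1 g\<bar> \<le> e * levy_functional a \<sigma>1 m1 (\<lambda>_. 1)"
      "\<bar>levy_functional a \<sigma>2 m2 g\<bar> \<le> e * levy_functional a \<sigma>2 m2 (\<lambda>_. 1)"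
      using levy_functional_bound[OF assms(1,3)] levy_functional_bound[OF assms(2,3)] by blast+
    then show "\<bar>D g\<bar> \<le> e * C"
      unfolding D_def C_def distrib_left by arith
  qed (use assms(4,5) in \<open>simp_all add: D_def\<close>)
  then show ?thesis unfolding D_def by simp
qed

lemma lk_integrand_second_difference:
  assumes "0 < a" "0 < h"
  shows "lk_integrand (a * real (n + 2)) h - 2 * lk_integrand (a * real (n + 1)) h
      + lk_integrand (a * real n) h = levy_point a h ^ n * levy_weight a h"
proof -
  define E where "E = exp (- a * h)"
  have powers: "exp (- (a * real k) * h) = E ^ k" for k
    unfolding E_def by (simp add: exp_of_nat_mult[symmetric] algebra_simps)
  have "lk_integrand (a * real (n + 2)) h - 2 * lk_integrand (a * real (n + 1)) h
      + lk_integrand (a * real n) h = E ^ (n + 2) - 2 * E ^ (n + 1) + E ^ n"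
    unfolding lk_integrand_def powers[symmetric] by (simp add: algebra_simps)
  also have "\<dots> = E ^ n * (1 - E)\<^sup>2"
    by (simp add: algebra_simps power2_eq_square)
  finally show ?thesis
    using assms unfolding levy_point_def levy_weight_def E_def by simp
qed

lemma lk_exponent_second_difference:
  assumes "levy_measure_pos m" "0 < a"
  shows "lk_exponent \<gamma> \<sigma> m (a * real (n + 2)) - 2 * lk_exponent \<gamma> \<sigma> m (a * real (n + 1))
      + lk_exponent \<gamma> \<sigma> m (a * real n) = levy_functional a \<sigma> m (\<lambda>t. t ^ n)"
proof -
  have integrable: "integrable m (lk_integrand (a * real k))" for k
    using assms by (intro integrable_lk_integrand) auto
  have "(\<integral>h. lk_integrand (a * real (n + 2)) h \<partial>m) - 2 * (\<integral>h. lk_integrand (a * real (n + 1)) h \<partial>m)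
      + (\<integral>h. lk_integrand (a * real n) h \<partial>m)
      = (\<integral>h. lk_integrand (a * real (n + 2)) h - 2 * lk_integrand (a * real (n + 1)) h
          + lk_integrand (a * real n) h \<partial>m)"
    using integrable[of "n + 2"] integrable[of "n + 1"] integrable[of n] by simp
  also have "\<dots> = (\<integral>h. levy_point a h ^ n * levy_weight a h \<partial>m)"
  proof (rule integral_cong_AE)
    show "(\<lambda>h. lk_integrand (a * real (n + 2)) h - 2 * lk_integrand (a * real (n + 1)) h
        + lk_integrand (a * real n) h) \<in> borel_measurable m"
      using integrable[of "n + 2"] integrable[of "n + 1"] integrable[of n] by measurable
    show "(\<lambda>h. levy_point a h ^ n * levy_weight a h) \<in> borel_measurable m"
      using integrable_levy_functional[OF assms continuous_on_power[OF continuous_on_id]] by simp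
    show "AE h in m. lk_integrand (a * real (n + 2)) h - 2 * lk_integrand (a * real (n + 1)) h
        + lk_integrand (a * real n) h = levy_point a h ^ n * levy_weight a h"
      using levy_measure_pos_AE_pos[OF assms(1)]
      by eventually_elim (rule lk_integrand_second_difference[OF assms(2)])
  qed
  finally show ?thesis
    unfolding lk_exponent_altdef levy_functional_def
    by (simp add: algebra_simps power2_eq_square)
qed

text \<open>The function \<open>f\<^sub>z\<close> of the header: \<open>(exp (-z h) - 1 + z (1 - exp (-h))) / (1 - exp (-a h))\<^sup>2\<close>
  written in the variable \<open>t = exp (-a h)\<close>, extended to the endpoints by its limits.\<close>

definition lk_kernel :: "real \<Rightarrow> real \<Rightarrow> real \<Rightarrow> real" where
  "lk_kernel a z t =
    (if t \<le> 0 then z - 1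
     else if 1 \<le> t then (z\<^sup>2 - z) / (2 * a\<^sup>2)
     else (t powr (z / a) - 1 + z * (1 - t powr (1 / a))) / (1 - t)\<^sup>2)"

lemma lk_kernel_continuous:
  assumes "0 < a" "0 < z"
  shows "continuous_on {0..1} (lk_kernel a z)"
proof -
  define q where "q t = (t powr (z / a) - 1 + z * (1 - t powr (1 / a))) / (1 - t)\<^sup>2" for t
  have kernel_inner: "lk_kernel a z t = q t" if "t \<in> {0<..<1}" for t
    using that by (simp add: lk_kernel_def q_def)
  have "continuous_on {0<..<1} q"
    unfolding q_def by (intro continuous_intros) auto
  then have inner: "continuous_on {0<..<1} (lk_kernel a z)"
    by (rule continuous_on_eq) (simp add: kernel_inner)
  have "(q \<longlongrightarrow> z - 1) (at_right 0)"
    unfolding q_def using assms by real_asymp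
  then have "(lk_kernel a z \<longlongrightarrow> lk_kernel a z 0) (at_right 0)"
    using eventually_mono[OF eventually_at_right_real[of 0 1] kernel_inner[symmetric]]
    by (simp add: Lim_transform_eventually lk_kernel_def)
  then have at0: "continuous (at 0 within {0..1}) (lk_kernel a z)"
    by (simp add: continuous_within at_within_Icc_at_right)
  have "(q \<longlongrightarrow> (z\<^sup>2 - z) / (2 * a\<^sup>2)) (at_left 1)"
    unfolding q_def using assms by (real_asymp simp: field_simps power2_eq_square)
  then have "(lk_kernel a z \<longlongrightarrow> lk_kernel a z 1) (at_left 1)"
    using eventually_mono[OF eventually_at_left_real[of 0 1] kernel_inner[symmetric]]
    by (simp add: Lim_transform_eventually lk_kernel_def)
  then have at1: "continuous (at 1 within {0..1}) (lk_kernel a z)"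
    by (simp add: continuous_within at_within_Icc_at_left)
  show ?thesis
    unfolding continuous_on_eq_continuous_within
  proof
    fix t :: real assume "t \<in> {0..1}"
    then consider "t = 0" | "t = 1" | "t \<in> {0<..<1}" by fastforce
    then show "continuous (at t within {0..1}) (lk_kernel a z)"
      by cases (use at0 at1 inner in
          \<open>auto simp: continuous_on_eq_continuous_at continuous_at_imp_continuous_at_within\<close>)
  qed
qed

text \<open>The constant \<open>c\<close> of the header; its term \<open>\<sigma>\<^sup>2 / 2\<close> compensates the value
  \<open>f\<^sub>z 1 = (z\<^sup>2 - z) / (2 a\<^sup>2)\<close> at the atom of \<open>\<mu>\<close>.\<close>

definition lk_linear_coeff :: "real \<Rightarrow> real \<Rightarrow> real measure \<Rightarrow> real" where
  "lk_linear_coeff \<gamma> \<sigma> m = - \<gamma> + \<sigma>\<^sup>2 / 2 + (\<integral>h. truncation_defect h \<partial>m)"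

lemma lk_integrand_eq_kernel:
  assumes "0 < a" "0 < h"
  shows "lk_integrand z h = lk_kernel a z (levy_point a h) * levy_weight a h + z * truncation_defect h"
proof -
  define t where "t = exp (- a * h)"
  have t: "0 < t" "t < 1" using assms unfolding t_def by auto
  have "t powr (z / a) = exp (- z * h)" "t powr (1 / a) = exp (- h)"
    using assms unfolding t_def by (simp_all add: powr_def)
  moreover have "levy_point a h = t" "levy_weight a h = (1 - t)\<^sup>2"
    using assms unfolding t_def levy_point_def levy_weight_def by simp_all
  moreover have "(1 - t)\<^sup>2 \<noteq> 0" using t by simp
  ultimately show ?thesis
    using t unfolding lk_kernel_def lk_integrand_def truncation_defect_def
    by (simp add: field_simps)
qed

lemma lk_exponent_eq_levy_functional:
  assumes "levy_measure_pos m" "0 < a" "0 < z"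
  shows "lk_exponent \<gamma> \<sigma> m z = levy_functional a \<sigma> m (lk_kernel a z) + z * lk_linear_coeff \<gamma> \<sigma> m"
proof -
  have kernel_integrable: "integrable m (\<lambda>h. lk_kernel a z (levy_point a h) * levy_weight a h)"
    by (rule integrable_levy_functional[OF assms(1,2) lk_kernel_continuous[OF assms(2,3)]])
  note defect_integrable = integrable_truncation_defect[OF assms(1)]
  have "(\<integral>h. lk_integrand z h \<partial>m)
      = (\<integral>h. lk_kernel a z (levy_point a h) * levy_weight a h + z * truncation_defect h \<partial>m)"
  proof (rule integral_cong_AE)
    show "lk_integrand z \<in> borel_measurable m"
      using integrable_lk_integrand[OF assms(1)] assms(3) by simp
    show "(\<lambda>h. lk_kernel a z (levy_point a h) * levy_weight a h + z * truncation_defect h) \<in> borel_measurable m"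
      using kernel_integrable defect_integrable by simp
    show "AE h in m. lk_integrand z h = lk_kernel a z (levy_point a h) * levy_weight a h + z * truncation_defect h"
      using levy_measure_pos_AE_pos[OF assms(1)] by eventually_elim (rule lk_integrand_eq_kernel[OF assms(2)])
  qed
  also have "\<dots> = (\<integral>h. lk_kernel a z (levy_point a h) * levy_weight a h \<partial>m) + z * (\<integral>h. truncation_defect h \<partial>m)"
    using kernel_integrable defect_integrable by simp
  finally show ?thesis
    using assms(2) unfolding lk_exponent_altdef levy_functional_def lk_linear_coeff_def
    by (simp add: lk_kernel_def field_simps power2_eq_square)
qed

lemma lk_exponent_eq_if_eq_on_lattice:
  assumes m1: "levy_measure_pos m1" and m2: "levy_measure_pos m2" and a: "0 < a"
    and lattice: "\<And>n::nat. lk_exponent \<gamma>1 \<sigma>1 m1 (a * real n) = lk_exponent \<gamma>2 \<sigma>2 m2 (a * real n)"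
    and "0 \<le> z"
  shows "lk_exponent \<gamma>1 \<sigma>1 m1 z = lk_exponent \<gamma>2 \<sigma>2 m2 z"
proof -
  have "levy_functional a \<sigma>1 m1 (\<lambda>t. t ^ j) = levy_functional a \<sigma>2 m2 (\<lambda>t. t ^ j)" for j
    using lk_exponent_second_difference[OF m1 a, of \<gamma>1 \<sigma>1 j]
      lk_exponent_second_difference[OF m2 a, of \<gamma>2 \<sigma>2 j] lattice[of j] lattice[of "j + 1"] lattice[of "j + 2"]
    by simp
  then have kernel: "levy_functional a \<sigma>1 m1 (lk_kernel a y) = levy_functional a \<sigma>2 m2 (lk_kernel a y)"
    if "0 < y" for y
    using levy_functional_eq_if_moments_eq[OF m1 m2 a _ lk_kernel_continuous[OF a that]] by blast
  have "a * lk_linear_coeff \<gamma>1 \<sigma>1 m1 = a * lk_linear_coeff \<gamma>2 \<sigma>2 m2"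
    using lattice[of 1] kernel[OF a] lk_exponent_eq_levy_functional[OF m1 a a, of \<gamma>1 \<sigma>1]
      lk_exponent_eq_levy_functional[OF m2 a a, of \<gamma>2 \<sigma>2]
    by simp
  then have "lk_linear_coeff \<gamma>1 \<sigma>1 m1 = lk_linear_coeff \<gamma>2 \<sigma>2 m2"
    using a by simp
  then show ?thesis
    using \<open>0 \<le> z\<close> kernel lk_exponent_eq_levy_functional[OF m1 a] lk_exponent_eq_levy_functional[OF m2 a]
    by (cases "z = 0") (simp_all add: lk_exponent_at_zero)
qed

theorem mainTheorem8:
  fixes \<alpha> :: real and \<psi>1 \<psi>2 :: "real \<Rightarrow> real"
  assumes "\<alpha> > 0"
    and "sp_laplace_exponent \<psi>1" and "sp_laplace_exponent \<psi>2"
    and "\<exists>d\<ge>0. (\<psi>1 has_real_derivative d) (at 0 within {0..})"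
    and "\<exists>d\<ge>0. (\<psi>2 has_real_derivative d) (at 0 within {0..})"
    and "\<forall>n::nat. n \<ge> 1 \<longrightarrow> \<psi>1 (\<alpha> * real n) = \<psi>2 (\<alpha> * real n)"
  shows "\<forall>z\<ge>0. \<psi>1 z = \<psi>2 z"
proof -
  obtain \<gamma>1 \<sigma>1 m1 where m1: "levy_measure_pos m1" and \<psi>1: "\<forall>z\<ge>0. \<psi>1 z = lk_exponent \<gamma>1 \<sigma>1 m1 z"
    using assms(2) unfolding sp_laplace_exponent_def by blast
  obtain \<gamma>2 \<sigma>2 m2 where m2: "levy_measure_pos m2" and \<psi>2: "\<forall>z\<ge>0. \<psi>2 z = lk_exponent \<gamma>2 \<sigma>2 m2 z"
    using assms(3) unfolding sp_laplace_exponent_def by blast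
  have lattice: "lk_exponent \<gamma>1 \<sigma>1 m1 (\<alpha> * real n) = lk_exponent \<gamma>2 \<sigma>2 m2 (\<alpha> * real n)" for n
  proof (cases "n = 0")
    case False
    then show ?thesis using assms(1,6) \<psi>1 \<psi>2 by simp
  qed (simp add: lk_exponent_at_zero)
  show ?thesis
    using lk_exponent_eq_if_eq_on_lattice[OF m1 m2 assms(1) lattice] \<psi>1 \<psi>2 by simp
qed

end
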